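(* For the $2$-cache problem, there is no knowledge state algorithm that is $\tfrac32$-competitive as a knowledge state algorithm and all of whose knowledge states have at most two active pages.
   Context: The $2$-cache problem: an infinite set $P$ of pages; states are the $2$-element subsets of $P$, with a given initial cache $s^0$; requests are pages; $d(x,y)=|x\setminus y|$; $\mathrm{cost}(x,r,y)=2$ if $x=y$ and $r\notin x$, $=d(x,y)$ if $r\in x$ or $r\in y$, and $=d(x,y)+1$ otherwise. $\Pi$ is the set of finitely supported probability distributions on states; $\mathrm{cost}(\pi,r,\pi')$ is the minimum of $\sum_{x,y}\gamma(x,y)\mathrm{cost}(x,r,y)$ over distributions $\gamma$ on $\mathrm{supp}(\pi)\times\mathrm{supp}(\pi')$ with marginals $\pi,\pi'$. An estimator is a function $\omega\ge0$ on states with $\omega(y)\le\omega(x)+d(x,y)$; a set $S$ supports $\omega$ if each $y$ has $x\in S$ with $\omega(y)=\omega(x)+d(x,y)$, and the estimator support is the minimal such set. The update is $(\omega\wedge r)(y)=\inf_x\{\omega(x)+\mathrm{cost}(x,r,y)\}$. Knowledge state algorithm $\mathcal A$: a knowledge state is a pair $k=(\pi,\omega)$, $\pi\in\Pi$, $\omega$ an estimator with finite support; initial state $(s^0,\omega^0)$ with $\omega^0(s^0)=0$. For each $k=(\pi,\omega)$ and request $r$, $\mathcal A$ specifies subsequents $k_i=(\pi_i,\omega_i)$ with weights $\lambda_i>0$ summing to $1$ (next state $k_i$ with probability $\lambda_i$) and a number $\mathrm{adjust}(k,r)$ with $(\omega\wedge r)(x)\ge\mathrm{adjust}(k,r)+\sum_i\lambda_i\omega_i(x)$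 for all $x$. Step cost $\mathrm{cost}(\pi,r,\sum_i\lambda_i\pi_i)$; $\mathrm{cost}_{\mathcal A}(\varrho)$ and $\mathrm{adjust}_{\mathcal A}(\varrho)$ are the sums over the steps. $\mathcal A$ is $C$-competitive as a knowledge state algorithm if there is $K$ with $E(\mathrm{cost}_{\mathcal A}(\varrho))\le C\cdot E(\mathrm{adjust}_{\mathcal A}(\varrho)+\omega^n(x))+K$ for every $\varrho=r^1\dots r^n$ and every state $x$, where $\omega^n$ is the estimator after $n$ steps. The active pages of a knowledge state $(\pi,\omega)$ are the pages belonging to some configuration in the distributional support of $\pi$ or in the estimator support of $\omega$. *)

theory Defs
  imports "HOL-Probability.Probability_Mass_Function"
begin

text \<open>Pages are elements of a type 'p (assumed infinite in the theorem);
  states (cache configurations) are 2-element sets of pages.\<close>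

definition states :: "'p set set" where
  "states = {x. finite x \<and> card x = 2}"

definition dist :: "'p set \<Rightarrow> 'p set \<Rightarrow> nat" where
  "dist x y = card (x - y)"

definition cost :: "'p set \<Rightarrow> 'p \<Rightarrow> 'p set \<Rightarrow> nat" where
  "cost x r y =
     (if x = y \<and> r \<notin> x then 2
      else if r \<in> x \<or> r \<in> y then dist x y
      else dist x y + 1)"

definition Pi_dist :: "'p set pmf set" where
  "Pi_dist = {\<pi>. finite (set_pmf \<pi>) \<and> set_pmf \<pi> \<subseteq> states}"

text \<open>Cost between distributions: minimum over couplings (with the given
  marginals; such a coupling is automatically supported on the product of
  the supports).\<close>
definition pcost :: "'p set pmf \<Rightarrow> 'p \<Rightarrow> 'p set pmf \<Rightarrow> real" where
  "pcost \<pi> r \<pi>' =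
     Inf {measure_pmf.expectation \<gamma> (\<lambda>(x, y). real (cost x r y)) | \<gamma>.
            map_pmf fst \<gamma> = \<pi> \<and> map_pmf snd \<gamma> = \<pi>'}"

definition estimator :: "('p set \<Rightarrow> real) \<Rightarrow> bool" where
  "estimator \<omega> \<longleftrightarrow>
     (\<forall>x\<in>states. 0 \<le> \<omega> x) \<and>
     (\<forall>x\<in>states. \<forall>y\<in>states. \<omega> y \<le> \<omega> x + real (dist x y))"

definition supports :: "'p set set \<Rightarrow> ('p set \<Rightarrow> real) \<Rightarrow> bool" where
  "supports S \<omega> \<longleftrightarrow> S \<subseteq> states \<and>
     (\<forall>y\<in>states. \<exists>x\<in>S. \<omega> y = \<omega> x + real (dist x y))"

definition est_support :: "('p set \<Rightarrow> real) \<Rightarrow> 'p set set" where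
  "est_support \<omega> = \<Inter> {S. supports S \<omega>}"

definition update :: "('p set \<Rightarrow> real) \<Rightarrow> 'p \<Rightarrow> 'p set \<Rightarrow> real" where
  "update \<omega> r y = (INF x\<in>states. \<omega> x + real (cost x r y))"

type_synonym 'p kstate = "'p set pmf \<times> ('p set \<Rightarrow> real)"

definition is_kstate :: "'p kstate \<Rightarrow> bool" where
  "is_kstate k \<longleftrightarrow> fst k \<in> Pi_dist \<and> estimator (snd k) \<and>
     (\<exists>S. finite S \<and> supports S (snd k))"

definition active_pages :: "'p kstate \<Rightarrow> 'p set" where
  "active_pages k = \<Union> (set_pmf (fst k)) \<union> \<Union> (est_support (snd k))"

text \<open>An algorithm maps a knowledge state and a request to a distribution on
  subsequent knowledge states (subsequent k_i chosen with probability
  lambda_i) together with an adjustment value.\<close>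

inductive_set reachable :: "'p kstate \<Rightarrow> ('p kstate \<Rightarrow> 'p \<Rightarrow> 'p kstate pmf) \<Rightarrow> 'p kstate set"
  for k0 A where
  init: "k0 \<in> reachable k0 A"
| step: "k \<in> reachable k0 A \<Longrightarrow> k' \<in> set_pmf (A k r) \<Longrightarrow> k' \<in> reachable k0 A"

definition ks_algorithm ::
  "'p set \<Rightarrow> ('p set \<Rightarrow> real) \<Rightarrow> ('p kstate \<Rightarrow> 'p \<Rightarrow> 'p kstate pmf) \<Rightarrow> ('p kstate \<Rightarrow> 'p \<Rightarrow> real) \<Rightarrow> bool"
  where
  "ks_algorithm s0 \<omega>0 A adj \<longleftrightarrow>
     is_kstate (return_pmf s0, \<omega>0) \<and> \<omega>0 s0 = 0 \<and>
     (\<forall>k\<in>reachable (return_pmf s0, \<omega>0) A. \<forall>r.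
        finite (set_pmf (A k r)) \<and>
        (\<forall>k'\<in>set_pmf (A k r). is_kstate k') \<and>
        (\<forall>x\<in>states. update (snd k) r x \<ge>
            adj k r + measure_pmf.expectation (A k r) (\<lambda>k'. snd k' x)))"

definition step_cost :: "('p kstate \<Rightarrow> 'p \<Rightarrow> 'p kstate pmf) \<Rightarrow> 'p kstate \<Rightarrow> 'p \<Rightarrow> real" where
  "step_cost A k r = pcost (fst k) r (bind_pmf (A k r) (\<lambda>k'. fst k'))"

text \<open>Distribution of (final knowledge state, total cost, total adjust) after
  serving a request sequence.\<close>
primrec run ::
  "('p kstate \<Rightarrow> 'p \<Rightarrow> 'p kstate pmf) \<Rightarrow> ('p kstate \<Rightarrow> 'p \<Rightarrow> real) \<Rightarrow> 'p kstate \<Rightarrow> 'p list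
     \<Rightarrow> ('p kstate \<times> real \<times> real) pmf" where
  "run A adj k [] = return_pmf (k, 0, 0)"
| "run A adj k (r # rs) =
     bind_pmf (A k r) (\<lambda>k'. map_pmf (\<lambda>(kn, c, a). (kn, step_cost A k r + c, adj k r + a))
                                     (run A adj k' rs))"

definition ks_competitive ::
  "real \<Rightarrow> 'p set \<Rightarrow> ('p set \<Rightarrow> real) \<Rightarrow> ('p kstate \<Rightarrow> 'p \<Rightarrow> 'p kstate pmf) \<Rightarrow> ('p kstate \<Rightarrow> 'p \<Rightarrow> real) \<Rightarrow> bool"
  where
  "ks_competitive C s0 \<omega>0 A adj \<longleftrightarrow>
     (\<exists>K. \<forall>\<rho>. \<forall>x\<in>states.
        measure_pmf.expectation (run A adj (return_pmf s0, \<omega>0) \<rho>) (\<lambda>(kn, c, a). c)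
        \<le> C * measure_pmf.expectation (run A adj (return_pmf s0, \<omega>0) \<rho>)
                (\<lambda>(kn, c, a). a + snd kn x) + K)"

end

theory Submission
  imports Defs
begin

text \<open>A knowledge state with at most two active pages is a single configuration s together with
  the cone estimator \<omega> = V + d(s, \<cdot>), because its estimator support can only consist of s.
  Let the adversary cycle through three pages and use the potential 3/2 V + h/12, where h counts
  the upcoming requests that are already cached. The estimator update forces
  2 (adjust + E V' - V) \<le> cost: on a miss, the two configurations reachable from s at cost 1
  are at distance 1 from each other. Hence every step costs at least 1/12 more than 3/2 times
  the change of adjustment plus potential, so after n requests the algorithm pays n/12 - O(1)
  more than 3/2 (adjust + estimator), contradicting 3/2-competitiveness.\<close>

lemma states_finite: "x \<in> states \<Longrightarrow> finite x"
  and states_card: "x \<in> states \<Longrightarrow> card x = 2"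
  by (auto simp: states_def)

lemma states_subset_eq: "x \<in> states \<Longrightarrow> y \<in> states \<Longrightarrow> x \<subseteq> y \<Longrightarrow> x = y"
  by (metis card_subset_eq states_card states_finite)

lemma dist_self [simp]: "Defs.dist x x = 0"
  by (simp add: Defs.dist_def)

lemma dist_triangle:
  "finite x \<Longrightarrow> finite y \<Longrightarrow> Defs.dist x z \<le> Defs.dist x y + Defs.dist y z"
proof -
  assume "finite x" "finite y"
  have "card (x - z) \<le> card ((x - y) \<union> (y - z))"
    using \<open>finite x\<close> \<open>finite y\<close> by (intro card_mono) auto
  also have "\<dots> \<le> card (x - y) + card (y - z)"
    by (rule card_Un_le)
  finally show ?thesis
    by (simp add: Defs.dist_def)
qed

lemma dist_commute: "x \<in> states \<Longrightarrow> y \<in> states \<Longrightarrow> Defs.dist x y = Defs.dist y x"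
  by (simp add: Defs.dist_def card_Diff_subset_Int states_finite states_card Int_commute)

lemma dist_ge_1:
  assumes "x \<in> states" "y \<in> states" "x \<noteq> y"
  shows "1 \<le> Defs.dist x y"
proof -
  have "x - y \<noteq> {}"
    using assms states_subset_eq by blast
  then show ?thesis
    using states_finite[OF assms(1)] by (simp add: Defs.dist_def Suc_le_eq card_gt_0_iff)
qed

lemma dist_le_2: "x \<in> states \<Longrightarrow> Defs.dist x y \<le> 2"
  by (metis Defs.dist_def Diff_subset card_mono states_card states_finite)

lemma dist_le_cost: "Defs.dist x y \<le> cost x r y"
  by (simp add: cost_def)

lemma cost_hit [simp]: "r \<in> s \<Longrightarrow> cost s r s = 0"
  by (simp add: cost_def)

lemma cost_ge_1: "s \<in> states \<Longrightarrow> s' \<in> states \<Longrightarrow> \<not> (s' = s \<and> r \<in> s) \<Longrightarrow> 1 \<le> cost s r s'"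
  using dist_ge_1[of s s'] dist_le_cost[of s s' r] by (cases "s' = s") (auto simp: cost_def)

lemma estimator_tight_trans:
  assumes "estimator \<omega>" "z \<in> states" "w \<in> states" "y \<in> states"
    and "\<omega> w = \<omega> z + real (Defs.dist z w)" "\<omega> y = \<omega> w + real (Defs.dist w y)"
  shows "\<omega> y = \<omega> z + real (Defs.dist z y)"
proof -
  have "Defs.dist z y \<le> Defs.dist z w + Defs.dist w y"
    using assms(2,3) by (intro dist_triangle states_finite)
  moreover have "\<omega> y \<le> \<omega> z + real (Defs.dist z y)"
    using assms(1,2,4) by (auto simp: estimator_def)
  ultimately show ?thesis
    using assms(5,6) by linarith
qed

text \<open>A tight pair x, y (that is, \<omega> y = \<omega> x + d(x, y)) with x in a finite supporting set and
  \<omega> x minimal lies in every supporting set: otherwise x itself is tightly reached from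
  a state of smaller value, and chaining tight pairs back into the finite set contradicts
  minimality.\<close>

lemma supports_est_support:
  fixes \<omega> :: "'p set \<Rightarrow> real"
  assumes est: "estimator \<omega>" and "finite S" and sup: "supports S \<omega>"
  shows "supports (est_support \<omega>) \<omega>"
  unfolding supports_def
proof
  show "est_support \<omega> \<subseteq> states"
    using sup by (auto simp: est_support_def supports_def)
next
  show "\<forall>y\<in>states. \<exists>x\<in>est_support \<omega>. \<omega> y = \<omega> x + real (Defs.dist x y)"
  proof
    fix y :: "'p set" assume y: "y \<in> states"
    define T where "T = {x \<in> S. \<omega> y = \<omega> x + real (Defs.dist x y)}"
    have "finite T" "T \<noteq> {}"
      using \<open>finite S\<close> sup y by (auto simp: T_def supports_def)
    then obtain x where "is_arg_min \<omega> (\<lambda>x. x \<in> T) x"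
      using ex_is_arg_min_if_finite by blast
    then have xT: "x \<in> T" and x_min: "\<And>x'. x' \<in> T \<Longrightarrow> \<omega> x \<le> \<omega> x'"
      by (auto simp: is_arg_min_def not_less)
    have x: "x \<in> states" "\<omega> y = \<omega> x + real (Defs.dist x y)"
      using xT sup by (auto simp: T_def supports_def)
    have "x \<in> S'" if sup': "supports S' \<omega>" for S'
    proof (rule ccontr)
      assume "x \<notin> S'"
      obtain x' where x': "x' \<in> S'" "x' \<in> states" "\<omega> x = \<omega> x' + real (Defs.dist x' x)"
        using sup' x(1) unfolding supports_def by blast
      with \<open>x \<notin> S'\<close> have "\<omega> x' < \<omega> x"
        using dist_ge_1[of x' x] x by fastforce
      obtain x'' where x'': "x'' \<in> S" "x'' \<in> states" "\<omega> x' = \<omega> x'' + real (Defs.dist x'' x')"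
        using sup x'(2) unfolding supports_def by blast
      have "\<omega> y = \<omega> x' + real (Defs.dist x' y)"
        using estimator_tight_trans[OF est x'(2) x(1) y x'(3) x(2)] .
      then have "\<omega> y = \<omega> x'' + real (Defs.dist x'' y)"
        using estimator_tight_trans[OF est x''(2) x'(2) y x''(3)] by blast
      then have "\<omega> x \<le> \<omega> x''"
        using x'' x_min by (simp add: T_def)
      then show False
        using \<open>\<omega> x' < \<omega> x\<close> x''(3) by linarith
    qed
    then have "x \<in> est_support \<omega>"
      by (simp add: est_support_def)
    then show "\<exists>x\<in>est_support \<omega>. \<omega> y = \<omega> x + real (Defs.dist x y)"
      using x(2) by blast
  qed
qed

lemma estimator_cone:
  assumes "estimator \<omega>" "finite S" "supports S \<omega>" "est_support \<omega> \<subseteq> {s}" "y \<in> states"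
  shows "\<omega> y = \<omega> s + real (Defs.dist s y)"
  using supports_est_support[OF assms(1-3)] assms(4,5) unfolding supports_def by blast

text \<open>Only meaningful when the distribution of k is a point mass.\<close>

definition ks_position :: "'p kstate \<Rightarrow> 'p set" where
  "ks_position k = the_elem (set_pmf (fst k))"

definition ks_value :: "'p kstate \<Rightarrow> real" where
  "ks_value k = snd k (ks_position k)"

text \<open>The only configuration made of active pages is the one in the support of the
  distribution.\<close>

lemma kstate_two_active_pages:
  assumes ks: "is_kstate k" and fin: "finite (active_pages k)" and two: "card (active_pages k) \<le> 2"
  shows "ks_position k \<in> states" "fst k = return_pmf (ks_position k)"
    and "\<And>y. y \<in> states \<Longrightarrow> snd k y = ks_value k + real (Defs.dist (ks_position k) y)"
proof -
  obtain s where s: "s \<in> set_pmf (fst k)"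
    using set_pmf_not_empty by fast
  have s_state: "s \<in> states"
    using ks s by (auto simp: is_kstate_def Pi_dist_def)
  have "s \<subseteq> active_pages k"
    using s by (auto simp: active_pages_def)
  then have "active_pages k = s"
    using fin two s_state by (metis card_mono card_subset_eq le_antisym states_card)
  then have only_s: "t = s" if "t \<in> states" "t \<subseteq> active_pages k" for t
    using that s_state states_subset_eq by blast
  have "set_pmf (fst k) \<subseteq> {s}"
    using ks only_s by (auto simp: is_kstate_def Pi_dist_def active_pages_def)
  then have fst_k: "fst k = return_pmf s"
    by (simp add: set_pmf_subset_singleton)
  then have pos: "ks_position k = s"
    by (simp add: ks_position_def)
  obtain S where S: "finite S" "supports S (snd k)"
    using ks by (auto simp: is_kstate_def)
  have "est_support (snd k) \<subseteq> {s}"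
    using S only_s by (auto simp: est_support_def supports_def active_pages_def)
  then show "\<And>y. y \<in> states \<Longrightarrow> snd k y = ks_value k + real (Defs.dist (ks_position k) y)"
    using estimator_cone[OF _ S] ks pos by (auto simp: is_kstate_def ks_value_def)
  show "ks_position k \<in> states" "fst k = return_pmf (ks_position k)"
    using s_state fst_k pos by simp_all
qed

lemma pcost_return_pmf_ge:
  "measure_pmf.expectation \<nu> (\<lambda>y. real (cost s r y)) \<le> pcost (return_pmf s) r \<nu>"
  unfolding pcost_def
proof (rule cInf_greatest)
  show "{measure_pmf.expectation \<gamma> (\<lambda>(x, y). real (cost x r y)) |\<gamma>.
        map_pmf fst \<gamma> = return_pmf s \<and> map_pmf snd \<gamma> = \<nu>} \<noteq> {}"
    using map_fst_pair_pmf[of "return_pmf s" \<nu>] map_snd_pair_pmf[of "return_pmf s" \<nu>] by blast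
next
  fix e assume "e \<in> {measure_pmf.expectation \<gamma> (\<lambda>(x, y). real (cost x r y)) |\<gamma>.
        map_pmf fst \<gamma> = return_pmf s \<and> map_pmf snd \<gamma> = \<nu>}"
  then obtain \<gamma> where e: "e = measure_pmf.expectation \<gamma> (\<lambda>(x, y). real (cost x r y))"
    and fst_\<gamma>: "map_pmf fst \<gamma> = return_pmf s" and snd_\<gamma>: "map_pmf snd \<gamma> = \<nu>"
    by blast
  have "fst p = s" if "p \<in> set_pmf \<gamma>" for p
    using that fst_\<gamma> by (metis pmf.set_map imageI set_return_pmf singletonD)
  then have "e = measure_pmf.expectation \<gamma> (\<lambda>p. real (cost s r (snd p)))"
    unfolding e by (intro integral_cong_AE AE_pmfI) (auto split: prod.splits)
  then show "measure_pmf.expectation \<nu> (\<lambda>y. real (cost s r y)) \<le> e"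
    using snd_\<gamma> by auto
qed

lemma expectation_mono_finite_pmf:
  fixes f g :: "'a \<Rightarrow> real"
  assumes "finite (set_pmf p)" "\<And>x. x \<in> set_pmf p \<Longrightarrow> f x \<le> g x"
  shows "measure_pmf.expectation p f \<le> measure_pmf.expectation p g"
  using assms by (intro integral_mono_AE integrable_measure_pmf_finite AE_pmfI)

lemma expectation_bind_finite_pmf:
  fixes h :: "'b \<Rightarrow> real"
  assumes "finite (set_pmf p)" "\<And>x. x \<in> set_pmf p \<Longrightarrow> finite (set_pmf (f x))"
  shows "measure_pmf.expectation (p \<bind> f) h
    = measure_pmf.expectation p (\<lambda>x. measure_pmf.expectation (f x) h)"
proof -
  have "measure_pmf.expectation (p \<bind> f) h
      = (\<Sum>x\<in>set_pmf p. pmf p x * measure_pmf.expectation (f x) h)"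
    using assms by (subst pmf_expectation_bind[of "set_pmf p"]) auto
  also have "\<dots> = measure_pmf.expectation p (\<lambda>x. measure_pmf.expectation (f x) h)"
    using assms(1) by (subst integral_measure_pmf_real[of "set_pmf p"]) (auto simp: mult.commute)
  finally show ?thesis .
qed

text \<open>If a request r is not cached in s = {a, b}, the configurations {a, r} and {b, r} are at
  cost 1 from s but at distance 1 from each other, so no distribution of next configurations
  can be close to both.\<close>

lemma twice_gain_le_expected_cost:
  fixes \<nu> :: "'p set pmf"
  assumes s: "s \<in> states" and fin: "finite (set_pmf \<nu>)" and \<nu>: "set_pmf \<nu> \<subseteq> states"
    and bound: "\<And>x. x \<in> states \<Longrightarrow>
      \<alpha> + measure_pmf.expectation \<nu> (\<lambda>y. real (Defs.dist y x)) \<le> V + real (cost s r x)"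
  shows "2 * (\<alpha> - V) \<le> measure_pmf.expectation \<nu> (\<lambda>y. real (cost s r y))"
proof (cases "r \<in> s")
  case True
  have "0 \<le> measure_pmf.expectation \<nu> (\<lambda>y. real (Defs.dist y s))"
    and "0 \<le> measure_pmf.expectation \<nu> (\<lambda>y. real (cost s r y))"
    and "real (cost s r s) = 0"
    using True by simp_all
  then show ?thesis
    using bound[OF s] by argo
next
  case False
  obtain a b where ab: "s = {a, b}" "a \<noteq> b"
    using s by (auto simp: states_def card_2_iff)
  define x1 where "x1 = {a, r}"
  define x2 where "x2 = {b, r}"
  have x12: "x1 \<in> states" "x2 \<in> states"
    using False ab by (auto simp: x1_def x2_def states_def)
  have "s - x1 = {b}" "s - x2 = {a}" "x1 - x2 = {a}"
    using False ab by (auto simp: x1_def x2_def)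
  then have cost_x12: "cost s r x1 = 1" "cost s r x2 = 1" and dist_x12: "Defs.dist x1 x2 = 1"
    by (simp_all add: cost_def x1_def x2_def Defs.dist_def)
  have integrable: "integrable (measure_pmf \<nu>) f" for f :: "'p set \<Rightarrow> real"
    using fin by (rule integrable_measure_pmf_finite)
  have "measure_pmf.expectation \<nu> (\<lambda>_. 1)
      \<le> measure_pmf.expectation \<nu> (\<lambda>y. real (Defs.dist y x1) + real (Defs.dist y x2))"
  proof (rule expectation_mono_finite_pmf[OF fin])
    fix y assume "y \<in> set_pmf \<nu>"
    then have "Defs.dist x1 x2 \<le> Defs.dist y x1 + Defs.dist y x2"
      using \<nu> x12 dist_triangle[of x1 y x2] dist_commute[of x1 y] by (auto simp: states_finite)
    then show "1 \<le> real (Defs.dist y x1) + real (Defs.dist y x2)"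
      using dist_x12 by simp
  qed
  then have dist_sum: "1 \<le> measure_pmf.expectation \<nu> (\<lambda>y. real (Defs.dist y x1))
      + measure_pmf.expectation \<nu> (\<lambda>y. real (Defs.dist y x2))"
    by (simp add: integrable)
  have "1 \<le> real (cost s r y)" if "y \<in> set_pmf \<nu>" for y
    using cost_ge_1[of s y r] False \<nu> s that by auto
  then have "measure_pmf.expectation \<nu> (\<lambda>_. 1) \<le> measure_pmf.expectation \<nu> (\<lambda>y. real (cost s r y))"
    by (rule expectation_mono_finite_pmf[OF fin])
  then have "1 \<le> measure_pmf.expectation \<nu> (\<lambda>y. real (cost s r y))"
    by simp
  then show ?thesis
    using bound[OF x12(1)] bound[OF x12(2)] cost_x12 dist_sum by simp
qed

definition consecutive_triples_distinct :: "(nat \<Rightarrow> 'a) \<Rightarrow> bool" where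
  "consecutive_triples_distinct q \<longleftrightarrow> (\<forall>j. distinct [q j, q (Suc j), q (Suc (Suc j))])"

lemma ex_consecutive_triples_distinct:
  assumes "infinite (UNIV :: 'a set)"
  obtains q :: "nat \<Rightarrow> 'a" where "consecutive_triples_distinct q"
proof -
  obtain a b c :: 'a where abc: "distinct [a, b, c]"
    using infinite_arbitrarily_large[OF assms, of 3] by (auto simp: card_3_iff)
  have "j mod 3 = 0 \<or> j mod 3 = 1 \<or> j mod 3 = 2" for j :: nat
    by arith
  then have "consecutive_triples_distinct
      (\<lambda>j. if j mod 3 = 0 then a else if j mod 3 = 1 then b else c)"
    using abc by (auto simp: consecutive_triples_distinct_def mod_Suc)
  then show ?thesis
    by (rule that)
qed

definition lookahead_hits :: "(nat \<Rightarrow> 'p) \<Rightarrow> nat \<Rightarrow> 'p set \<Rightarrow> nat" where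
  "lookahead_hits q j s = (if q j \<notin> s then 0 else if q (Suc j) \<notin> s then 1 else 2)"

lemma lookahead_hits_le_2: "lookahead_hits q j s \<le> 2"
  by (simp add: lookahead_hits_def)

lemma lookahead_hits_Suc:
  assumes q: "consecutive_triples_distinct q" and s: "s \<in> states" and hit: "q j \<in> s"
  shows "lookahead_hits q (Suc j) s + 1 = lookahead_hits q j s"
proof (cases "q (Suc j) \<in> s")
  case True
  have "{q j, q (Suc j)} = s"
    using q s hit True states_subset_eq[of "{q j, q (Suc j)}" s]
    by (auto simp: consecutive_triples_distinct_def states_def)
  moreover have "distinct [q j, q (Suc j), q (Suc (Suc j))]"
    using q by (simp add: consecutive_triples_distinct_def)
  ultimately have "q (Suc (Suc j)) \<notin> s"
    by auto
  then show ?thesis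
    using True hit by (simp add: lookahead_hits_def)
qed (use hit in \<open>simp add: lookahead_hits_def\<close>)

text \<open>Serving a request either costs at least 1 or is a hit, and every hit uses up one unit of
  lookahead.\<close>

lemma lookahead_hits_le_cost:
  assumes q: "consecutive_triples_distinct q" and s: "s \<in> states" and s': "s' \<in> states"
  shows "1 + real (lookahead_hits q (Suc j) s') - real (lookahead_hits q j s)
    \<le> 3 * real (cost s (q j) s')"
proof (cases "s' = s \<and> q j \<in> s")
  case True
  then show ?thesis
    using lookahead_hits_Suc[OF q s, of j] by simp
next
  case False
  then show ?thesis
    using cost_ge_1[OF s s' False] lookahead_hits_le_2[of q "Suc j" s'] by simp
qed

definition potential :: "(nat \<Rightarrow> 'p) \<Rightarrow> nat \<Rightarrow> 'p kstate \<Rightarrow> real" where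
  "potential q j k = 3/2 * ks_value k + real (lookahead_hits q j (ks_position k)) / 12"

locale two_page_ks_algorithm =
  fixes s0 :: "'p set" and \<omega>0 :: "'p set \<Rightarrow> real"
    and A :: "'p kstate \<Rightarrow> 'p \<Rightarrow> 'p kstate pmf" and adj :: "'p kstate \<Rightarrow> 'p \<Rightarrow> real"
  assumes algorithm: "ks_algorithm s0 \<omega>0 A adj"
    and two_active_pages: "\<And>k. k \<in> reachable (return_pmf s0, \<omega>0) A \<Longrightarrow>
      finite (active_pages k) \<and> card (active_pages k) \<le> 2"
begin

abbreviation k0 :: "'p kstate" where
  "k0 \<equiv> (return_pmf s0, \<omega>0)"

abbreviation reach :: "'p kstate set" where
  "reach \<equiv> reachable k0 A"

lemma subsequent_reachable: "k \<in> reach \<Longrightarrow> k' \<in> set_pmf (A k r) \<Longrightarrow> k' \<in> reach"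
  by (rule reachable.step)

lemma finite_subsequents: "k \<in> reach \<Longrightarrow> finite (set_pmf (A k r))"
  using algorithm by (auto simp: ks_algorithm_def)

lemma adjust_le_update:
  "k \<in> reach \<Longrightarrow> x \<in> states \<Longrightarrow>
    adj k r + measure_pmf.expectation (A k r) (\<lambda>k'. snd k' x) \<le> update (snd k) r x"
  using algorithm by (auto simp: ks_algorithm_def)

lemma reachable_kstate: "k \<in> reach \<Longrightarrow> is_kstate k"
  by (induction rule: reachable.induct) (use algorithm in \<open>auto simp: ks_algorithm_def\<close>)

lemma reachable_position:
  assumes "k \<in> reach"
  shows "ks_position k \<in> states" "fst k = return_pmf (ks_position k)"
    and "\<And>y. y \<in> states \<Longrightarrow> snd k y = ks_value k + real (Defs.dist (ks_position k) y)"
  using kstate_two_active_pages[OF reachable_kstate] two_active_pages assms by auto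

lemma initial_position: "ks_position k0 = s0"
  by (simp add: ks_position_def)

lemma initial_value: "ks_value k0 = 0"
  using algorithm by (simp add: ks_value_def initial_position ks_algorithm_def)

lemma run_finite_reachable:
  assumes "k \<in> reach"
  shows "finite (set_pmf (run A adj k \<rho>)) \<and> (\<forall>t\<in>set_pmf (run A adj k \<rho>). fst t \<in> reach)"
  using assms
proof (induction \<rho> arbitrary: k)
  case (Cons r \<rho>)
  then have "finite (set_pmf (A k r))"
    and "\<And>k'. k' \<in> set_pmf (A k r) \<Longrightarrow>
      finite (set_pmf (run A adj k' \<rho>)) \<and> (\<forall>t\<in>set_pmf (run A adj k' \<rho>). fst t \<in> reach)"
    using finite_subsequents subsequent_reachable by blast+
  then show ?case
    by (fastforce split: prod.splits)
qed simp

lemma step_cost_ge_expected_cost: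
  assumes k: "k \<in> reach"
  shows "measure_pmf.expectation (A k r) (\<lambda>k'. real (cost (ks_position k) r (ks_position k')))
    \<le> step_cost A k r"
proof -
  have "bind_pmf (A k r) fst = map_pmf ks_position (A k r)"
    unfolding map_pmf_def using reachable_position(2) subsequent_reachable[OF k]
    by (intro bind_pmf_cong) auto
  then have "step_cost A k r = pcost (return_pmf (ks_position k)) r (map_pmf ks_position (A k r))"
    using reachable_position(2)[OF k] by (simp add: step_cost_def)
  then show ?thesis
    using pcost_return_pmf_ge[of "map_pmf ks_position (A k r)" "ks_position k" r] by simp
qed

lemma update_le_cone:
  assumes k: "k \<in> reach" and x: "x \<in> states"
  shows "update (snd k) r x \<le> ks_value k + real (cost (ks_position k) r x)"
proof -
  have "bdd_below ((\<lambda>x'. snd k x' + real (cost x' r x)) ` states)"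
    using reachable_kstate[OF k] by (intro bdd_belowI2[where m=0]) (auto simp: is_kstate_def estimator_def)
  then show ?thesis
    unfolding update_def ks_value_def using reachable_position(1)[OF k] by (rule cINF_lower)
qed

lemma twice_gain_le_step_cost:
  assumes k: "k \<in> reach"
  shows "2 * (adj k r + measure_pmf.expectation (A k r) ks_value - ks_value k) \<le> step_cost A k r"
proof -
  let ?\<nu> = "map_pmf ks_position (A k r)"
  have fin: "finite (set_pmf (A k r))"
    using finite_subsequents[OF k] .
  have "adj k r + measure_pmf.expectation (A k r) ks_value
      + measure_pmf.expectation ?\<nu> (\<lambda>y. real (Defs.dist y x))
    \<le> ks_value k + real (cost (ks_position k) r x)" if x: "x \<in> states" for x
  proof -
    have "measure_pmf.expectation (A k r) ks_value
        + measure_pmf.expectation ?\<nu> (\<lambda>y. real (Defs.dist y x))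
      = measure_pmf.expectation (A k r) (\<lambda>k'. ks_value k' + real (Defs.dist (ks_position k') x))"
      using fin by (simp add: integrable_measure_pmf_finite)
    also have "\<dots> = measure_pmf.expectation (A k r) (\<lambda>k'. snd k' x)"
      using reachable_position(3)[OF subsequent_reachable[OF k] x]
      by (intro integral_cong_AE AE_pmfI) auto
    finally show ?thesis
      using adjust_le_update[OF k x, of r] update_le_cone[OF k x, of r] by linarith
  qed
  then have "2 * (adj k r + measure_pmf.expectation (A k r) ks_value - ks_value k)
      \<le> measure_pmf.expectation ?\<nu> (\<lambda>y. real (cost (ks_position k) r y))"
    using fin reachable_position(1) subsequent_reachable[OF k]
    by (intro twice_gain_le_expected_cost reachable_position(1)[OF k]) auto
  then show ?thesis
    using step_cost_ge_expected_cost[OF k, of r] by simp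
qed

text \<open>By the previous lemma, 3/2 times the gain in adjustment plus value is at most 3/4 of the
  step cost; the remaining quarter pays for 1/12 plus the change in lookahead.\<close>

lemma amortized_step:
  assumes q: "consecutive_triples_distinct q" and k: "k \<in> reach"
  shows "1/12 + measure_pmf.expectation (A k (q j)) (potential q (Suc j)) - potential q j k
    \<le> step_cost A k (q j) - 3/2 * adj k (q j)"
proof -
  let ?\<mu> = "A k (q j)" and ?s = "ks_position k"
  have fin: "finite (set_pmf ?\<mu>)"
    using finite_subsequents[OF k] .
  define EC where "EC = measure_pmf.expectation ?\<mu> (\<lambda>k'. real (cost ?s (q j) (ks_position k')))"
  define EH where "EH = measure_pmf.expectation ?\<mu> (\<lambda>k'. real (lookahead_hits q (Suc j) (ks_position k')))"
  have "measure_pmf.expectation ?\<mu> (\<lambda>k'. 1 - real (lookahead_hits q j ?s)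
        + real (lookahead_hits q (Suc j) (ks_position k')))
      \<le> measure_pmf.expectation ?\<mu> (\<lambda>k'. 3 * real (cost ?s (q j) (ks_position k')))"
    using lookahead_hits_le_cost[OF q reachable_position(1)[OF k] reachable_position(1)]
      subsequent_reachable[OF k]
    by (intro expectation_mono_finite_pmf[OF fin]) (simp add: algebra_simps)
  then have "1 - real (lookahead_hits q j ?s) + EH \<le> 3 * EC"
    using fin by (simp add: EC_def EH_def integrable_measure_pmf_finite)
  moreover have "EC \<le> step_cost A k (q j)"
    using step_cost_ge_expected_cost[OF k] by (simp add: EC_def)
  moreover have "2 * (adj k (q j) + measure_pmf.expectation ?\<mu> ks_value - ks_value k)
      \<le> step_cost A k (q j)"
    using twice_gain_le_step_cost[OF k] .
  moreover have "measure_pmf.expectation ?\<mu> (potential q (Suc j))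
      = 3/2 * measure_pmf.expectation ?\<mu> ks_value + EH / 12"
    using fin by (simp add: potential_def[abs_def] EH_def integrable_measure_pmf_finite)
  ultimately show ?thesis
    by (simp add: potential_def)
qed

lemma amortized_run:
  assumes q: "consecutive_triples_distinct q" and "k \<in> reach"
  shows "real n / 12 - potential q j k
    \<le> measure_pmf.expectation (run A adj k (map q [j..<j + n]))
        (\<lambda>(kn, c, a). c - 3/2 * a - potential q (j + n) kn)"
  using assms(2)
proof (induction n arbitrary: j k)
  case (Suc n)
  let ?\<mu> = "A k (q j)" and ?run = "\<lambda>k'. run A adj k' (map q [Suc j..<Suc j + n])"
  let ?F = "\<lambda>(kn, c, a). c - 3/2 * a - potential q (Suc j + n) kn"
  define c0 where "c0 = step_cost A k (q j) - 3/2 * adj k (q j)"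
  define g :: "'p kstate \<times> real \<times> real \<Rightarrow> 'p kstate \<times> real \<times> real"
    where "g = (\<lambda>(kn, c, a). (kn, step_cost A k (q j) + c, adj k (q j) + a))"
  have fin: "finite (set_pmf ?\<mu>)"
    using finite_subsequents[OF Suc.prems] .
  have next_reach: "k' \<in> reach" if "k' \<in> set_pmf ?\<mu>" for k'
    using subsequent_reachable[OF Suc.prems that] .
  have fin_run: "finite (set_pmf (?run k'))" if "k' \<in> set_pmf ?\<mu>" for k'
    using run_finite_reachable[OF next_reach[OF that]] by blast
  have "map q [j..<j + Suc n] = q j # map q [Suc j..<Suc j + n]"
    by (simp add: upt_conv_Cons del: upt_Suc)
  then have run_Suc: "run A adj k (map q [j..<j + Suc n]) = ?\<mu> \<bind> (\<lambda>k'. map_pmf g (?run k'))"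
    by (simp add: g_def)
  have shift: "measure_pmf.expectation (map_pmf g (?run k')) ?F
      = c0 + measure_pmf.expectation (?run k') ?F" if "k' \<in> set_pmf ?\<mu>" for k'
  proof -
    have "?F (g u) = c0 + ?F u" for u
      by (cases u) (simp add: g_def c0_def field_simps)
    then show ?thesis
      using fin_run[OF that] by (simp add: integrable_measure_pmf_finite)
  qed
  have "real (Suc n) / 12 - potential q j k
      \<le> c0 + real n / 12 - measure_pmf.expectation ?\<mu> (potential q (Suc j))"
    using amortized_step[OF q Suc.prems, of j] unfolding c0_def of_nat_Suc by argo
  also have "\<dots> = measure_pmf.expectation ?\<mu> (\<lambda>k'. c0 + (real n / 12 - potential q (Suc j) k'))"
    using fin by (simp add: integrable_measure_pmf_finite)
  also have "\<dots> \<le> measure_pmf.expectation ?\<mu> (\<lambda>k'. c0 + measure_pmf.expectation (?run k') ?F)"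
  proof (intro expectation_mono_finite_pmf[OF fin] add_left_mono)
    fix k' assume "k' \<in> set_pmf ?\<mu>"
    show "real n / 12 - potential q (Suc j) k' \<le> measure_pmf.expectation (?run k') ?F"
      by (rule Suc.IH[OF next_reach[OF \<open>k' \<in> set_pmf ?\<mu>\<close>]])
  qed
  also have "\<dots> = measure_pmf.expectation ?\<mu> (\<lambda>k'. measure_pmf.expectation (map_pmf g (?run k')) ?F)"
    using shift by (intro integral_cong_AE AE_pmfI) auto
  also have "\<dots> = measure_pmf.expectation (run A adj k (map q [j..<j + Suc n])) ?F"
    unfolding run_Suc using fin fin_run by (simp add: expectation_bind_finite_pmf)
  finally show ?case
    by simp
qed simp

text \<open>The final estimator is the cone around the final configuration, so it exceeds the final
  value by at most the diameter 2 at s0; the potential starts at most at 1/6.\<close>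

lemma expected_cost_excess:
  assumes q: "consecutive_triples_distinct q"
  shows "real n / 12 - 10/3
    \<le> measure_pmf.expectation (run A adj k0 (map q [0..<n])) (\<lambda>(kn, c, a). c)
      - 3/2 * measure_pmf.expectation (run A adj k0 (map q [0..<n])) (\<lambda>(kn, c, a). a + snd kn s0)"
proof -
  let ?p = "run A adj k0 (map q [0..<n])"
  have k0: "k0 \<in> reach"
    by (rule reachable.init)
  have s0: "s0 \<in> states"
    using reachable_position(1)[OF k0] by (simp add: initial_position)
  have fin: "finite (set_pmf ?p)" and final_reach: "\<And>t. t \<in> set_pmf ?p \<Longrightarrow> fst t \<in> reach"
    using run_finite_reachable[OF k0] by blast+
  have "potential q 0 k0 \<le> 1/6"
    using lookahead_hits_le_2[of q 0 s0] by (simp add: potential_def initial_value initial_position)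
  then have "real n / 12 - 1/6
      \<le> measure_pmf.expectation ?p (\<lambda>(kn, c, a). c - 3/2 * a - potential q n kn)"
    using amortized_run[OF q k0, of n 0] by simp
  also have "\<dots> \<le> measure_pmf.expectation ?p (\<lambda>(kn, c, a). c - 3/2 * (a + snd kn s0) + 3)"
  proof (rule expectation_mono_finite_pmf[OF fin], clarify)
    fix kn c a assume "(kn, c, a) \<in> set_pmf ?p"
    then have kn: "kn \<in> reach"
      using final_reach by fastforce
    have "snd kn s0 = ks_value kn + real (Defs.dist (ks_position kn) s0)"
      using reachable_position(3)[OF kn s0] .
    moreover have "real (Defs.dist (ks_position kn) s0) \<le> 2"
      using dist_le_2[OF reachable_position(1)[OF kn]] by simp
    moreover have "0 \<le> real (lookahead_hits q n (ks_position kn))"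
      by simp
    ultimately show "c - 3/2 * a - potential q n kn \<le> c - 3/2 * (a + snd kn s0) + 3"
      unfolding potential_def by argo
  qed
  also have "\<dots> = measure_pmf.expectation ?p (\<lambda>(kn, c, a). c)
      - 3/2 * measure_pmf.expectation ?p (\<lambda>(kn, c, a). a + snd kn s0) + 3"
    using fin by (simp add: integrable_measure_pmf_finite case_prod_beta' case_prod_beta)
  finally show ?thesis
    by simp
qed

end

theorem mainTheorem11:
  fixes s0 :: "'p set"
  assumes "infinite (UNIV :: 'p set)"
    and "s0 \<in> states"
  shows "\<not> (\<exists>\<omega>0 A adj.
              ks_algorithm s0 \<omega>0 A adj \<and>
              ks_competitive (3/2) s0 \<omega>0 A adj \<and>
              (\<forall>k\<in>reachable (return_pmf s0, \<omega>0) A.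
                 finite (active_pages k) \<and> card (active_pages k) \<le> 2))"
proof
  assume "\<exists>\<omega>0 A adj.
              ks_algorithm s0 \<omega>0 A adj \<and>
              ks_competitive (3/2) s0 \<omega>0 A adj \<and>
              (\<forall>k\<in>reachable (return_pmf s0, \<omega>0) A.
                 finite (active_pages k) \<and> card (active_pages k) \<le> 2)"
  then obtain \<omega>0 A adj where "two_page_ks_algorithm s0 \<omega>0 A adj"
    and "ks_competitive (3/2) s0 \<omega>0 A adj"
    by (auto simp: two_page_ks_algorithm_def)
  then interpret two_page_ks_algorithm s0 \<omega>0 A adj
    by simp
  obtain q :: "nat \<Rightarrow> 'p" where q: "consecutive_triples_distinct q"
    using ex_consecutive_triples_distinct[OF assms(1)] .
  obtain K where K: "\<And>\<rho>. measure_pmf.expectation (run A adj k0 \<rho>) (\<lambda>(kn, c, a). c)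
      \<le> 3/2 * measure_pmf.expectation (run A adj k0 \<rho>) (\<lambda>(kn, c, a). a + snd kn s0) + K"
    using \<open>ks_competitive (3/2) s0 \<omega>0 A adj\<close> assms(2) unfolding ks_competitive_def by blast
  define n where "n = nat \<lceil>12 * K\<rceil> + 41"
  have "real n / 12 - 10/3 \<le> K"
    using expected_cost_excess[OF q, of n] K[of "map q [0..<n]"] by linarith
  moreover have "12 * K + 41 \<le> real n"
    unfolding n_def by linarith
  ultimately show False
    by linarith
qed

end
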